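(* Let $\Delta,\omega,t$ be integers with $\omega\ge2$ and $2\le t\le\omega$, and suppose $\omega-1$ divides $\Delta$. Then \[ f_t(\Delta,\omega)=\rho_t\Big(T\big(\Delta+\tfrac{\Delta}{\omega-1},\,\omega\big)\Big)=\frac1t\binom{\omega-1}{t-1}\Big(\frac{\Delta}{\omega-1}\Big)^{t-1}. \]
   Context: $\mathcal{G}(\Delta,\omega)$ denotes the class of finite simple graphs $G$ with maximum degree $\Delta(G)\le\Delta$ and clique number $\omega(G)\le\omega$. $k_t(G)$ is the number of copies of $K_t$ in $G$ and $\rho_t(G)=k_t(G)/|V(G)|$. $f_t(\Delta,\omega)=\sup\{\rho_t(G): G\in\mathcal{G}(\Delta,\omega),\ |V(G)|\ge 1\}$. $T(n,r)$ denotes the $r$-partite Turán graph on $n$ vertices: the complete $r$-partite graph on $n$ vertices whose part sizes are all $\lfloor n/r\rfloor$ or $\lceil n/r\rceil$. *)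

theory Defs
  imports "HOL-Analysis.Analysis"
begin

text \<open>Finite simple graphs with vertex set V (a finite set of naturals; every finite
simple graph is isomorphic to one of these) and a symmetric irreflexive edge relation E
whose edges lie inside V.\<close>

definition simple_graph :: "nat set \<Rightarrow> (nat \<Rightarrow> nat \<Rightarrow> bool) \<Rightarrow> bool" where
  "simple_graph V E \<longleftrightarrow> finite V \<and>
     (\<forall>x y. E x y \<longrightarrow> x \<in> V \<and> y \<in> V \<and> x \<noteq> y) \<and>
     (\<forall>x y. E x y \<longrightarrow> E y x)"

definition degree :: "nat set \<Rightarrow> (nat \<Rightarrow> nat \<Rightarrow> bool) \<Rightarrow> nat \<Rightarrow> nat" where
  "degree V E v = card {u \<in> V. E v u}"

definition is_clique :: "nat set \<Rightarrow> (nat \<Rightarrow> nat \<Rightarrow> bool) \<Rightarrow> nat set \<Rightarrow> bool" where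
  "is_clique V E S \<longleftrightarrow> S \<subseteq> V \<and> (\<forall>x\<in>S. \<forall>y\<in>S. x \<noteq> y \<longrightarrow> E x y)"

definition in_class :: "nat \<Rightarrow> nat \<Rightarrow> nat set \<Rightarrow> (nat \<Rightarrow> nat \<Rightarrow> bool) \<Rightarrow> bool" where
  "in_class \<Delta> \<omega> V E \<longleftrightarrow> simple_graph V E \<and>
     (\<forall>v\<in>V. degree V E v \<le> \<Delta>) \<and>
     (\<forall>S. is_clique V E S \<longrightarrow> card S \<le> \<omega>)"

definition k_cliques :: "nat \<Rightarrow> nat set \<Rightarrow> (nat \<Rightarrow> nat \<Rightarrow> bool) \<Rightarrow> nat" where
  "k_cliques t V E = card {S. is_clique V E S \<and> card S = t}"

definition rho :: "nat \<Rightarrow> nat set \<Rightarrow> (nat \<Rightarrow> nat \<Rightarrow> bool) \<Rightarrow> real" where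
  "rho t V E = real (k_cliques t V E) / real (card V)"

text \<open>f_t(Delta, omega) as a supremum in the extended reals (so that no junk value of a
real Sup on an unbounded set can arise).\<close>
definition f_sup :: "nat \<Rightarrow> nat \<Rightarrow> nat \<Rightarrow> ereal" where
  "f_sup t \<Delta> \<omega> = (SUP G \<in> {(V, E). in_class \<Delta> \<omega> V E \<and> V \<noteq> {}}. ereal (rho t (fst G) (snd G)))"

text \<open>Turan graph T(n,r) on {0..<n}: vertex i lies in part (i mod r); the parts have sizes
floor(n/r) or ceiling(n/r), and two vertices are adjacent iff they lie in different parts.\<close>
definition turan_V :: "nat \<Rightarrow> nat set" where
  "turan_V n = {0..<n}"

definition turan_E :: "nat \<Rightarrow> nat \<Rightarrow> nat \<Rightarrow> nat \<Rightarrow> bool" where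
  "turan_E n r x y \<longleftrightarrow> x < n \<and> y < n \<and> x mod r \<noteq> y mod r"

end

theory Submission
  imports Defs
begin

text \<open>Counting pairs (vertex, t-clique containing it) gives t k_t(G) as a sum over the
vertices v of the number of t-cliques through v, which is the number of (t-1)-cliques of
the neighbourhood of v: a graph on at most Delta vertices with clique number at most
omega - 1. Zykov's bound k_s <= C(r,s) (n/r)^s for graphs on n vertices with clique number
at most r bounds this by C(omega-1, t-1) (Delta/(omega-1))^(t-1). It is proved by induction
on r: splitting off the neighbourhood N of a vertex lying in the most s-cliques gives
k_s(G) <= k_s(N) + (n - |N|) k_(s-1)(N), and the induction hypothesis for N together with
the convexity of x^s closes the step. The Turan graph with omega parts of size
Delta/(omega-1) lies in the class and attains the bound.\<close>

lemma power_ge_tangent: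
  fixes x u :: real
  assumes "x \<ge> 0" "u \<ge> 0"
  shows "x ^ k * ((real k + 1) * u - real k * x) \<le> u ^ Suc k"
proof (cases "x = 0")
  case True
  then show ?thesis using assms by (cases k) auto
next
  case False
  with assms have x: "x > 0" by simp
  have "1 + real (Suc k) * (u / x - 1) \<le> (1 + (u / x - 1)) ^ Suc k"
    by (rule Bernoulli_inequality) (use x assms in simp)
  then have "x ^ Suc k * (1 + real (Suc k) * (u / x - 1)) \<le> x ^ Suc k * (u / x) ^ Suc k"
    using x by (intro mult_left_mono) auto
  also have "\<dots> = u ^ Suc k" using x by (simp add: power_divide)
  also have "x ^ Suc k * (1 + real (Suc k) * (u / x - 1)) = x ^ k * ((real k + 1) * u - real k * x)"
    using x by (simp add: field_simps)
  finally show ?thesis .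
qed

lemma binomial_power_mix_le:
  fixes x y :: real
  assumes "p \<ge> 1" "x \<ge> 0" "y \<ge> 0"
  shows "real (p choose Suc k) * x ^ Suc k + y * (real (p choose k) * x ^ k)
         \<le> real (Suc p choose Suc k) * ((p * x + y) / (p + 1)) ^ Suc k"
proof -
  define A B C u where "A = real (p choose k)" and "B = real (p choose Suc k)"
    and "C = real (Suc p choose Suc k)" and "u = (p * x + y) / (real p + 1)"
  have pascal: "C = A + B" unfolding A_def B_def C_def by simp
  have "real (Suc p) * A = C * real (Suc k)"
    unfolding A_def C_def by (metis Suc_times_binomial_eq of_nat_mult)
  then have absorb: "(p + 1) * A = C * (k + 1)" by (simp add: add.commute)
  have u: "(p + 1) * u = p * x + y" unfolding u_def by (simp add: field_simps)
  have coeff: "A * p - A * k - B * k = B" using absorb pascal by (simp add: algebra_simps)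
  have "C * ((real k + 1) * u - real k * x) = (C * (k + 1)) * u - C * k * x"
    by (simp add: algebra_simps)
  also have "\<dots> = A * ((p + 1) * u) - (A + B) * k * x"
    by (subst absorb[symmetric]) (simp add: pascal algebra_simps)
  also have "\<dots> = (A * p - A * k - B * k) * x + A * y" unfolding u by (simp add: algebra_simps)
  finally have key: "C * ((real k + 1) * u - real k * x) = B * x + A * y" unfolding coeff .
  have "B * x ^ Suc k + y * (A * x ^ k) = x ^ k * (B * x + A * y)"
    by (simp add: algebra_simps)
  also have "\<dots> = C * (x ^ k * ((real k + 1) * u - real k * x))"
    unfolding key[symmetric] by (simp add: algebra_simps)
  also have "\<dots> \<le> C * u ^ Suc k"
    using power_ge_tangent[OF assms(2), of u k] assms unfolding u_def C_def
    by (intro mult_left_mono) auto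
  finally show ?thesis unfolding A_def B_def C_def u_def .
qed

text \<open>The edge relation need not be symmetric in Zykov's bound, so adjacency is required
in both directions.\<close>

definition nbhd :: "nat set \<Rightarrow> (nat \<Rightarrow> nat \<Rightarrow> bool) \<Rightarrow> nat \<Rightarrow> nat set" where
  "nbhd W E v = {u \<in> W. u \<noteq> v \<and> E v u \<and> E u v}"

definition cliques_through :: "nat \<Rightarrow> nat set \<Rightarrow> (nat \<Rightarrow> nat \<Rightarrow> bool) \<Rightarrow> nat \<Rightarrow> nat" where
  "cliques_through s W E v = card {S. is_clique W E S \<and> card S = s \<and> v \<in> S}"

lemma nbhd_subset: "nbhd W E v \<subseteq> W"
  by (auto simp: nbhd_def)

lemma finite_cliques: "finite W \<Longrightarrow> finite {S. is_clique W E S \<and> P S}"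
  by (rule finite_subset[of _ "Pow W"]) (auto simp: is_clique_def)

lemma k_cliques_0: "finite W \<Longrightarrow> k_cliques 0 W E = 1"
proof -
  assume "finite W"
  then have "{S. is_clique W E S \<and> card S = 0} = {{}}"
    by (auto simp: is_clique_def) (metis card_0_eq empty_iff finite_subset)
  then show ?thesis by (simp add: k_cliques_def)
qed

lemma k_cliques_1_le: "finite W \<Longrightarrow> k_cliques 1 W E \<le> card W"
proof -
  assume W: "finite W"
  have "{S. is_clique W E S \<and> card S = 1} \<subseteq> (\<lambda>w. {w}) ` W"
    by (auto simp: is_clique_def card_1_singleton_iff)
  then have "k_cliques 1 W E \<le> card ((\<lambda>w. {w}) ` W)"
    unfolding k_cliques_def using W by (intro card_mono) auto
  also have "\<dots> \<le> card W" using W by (rule card_image_le)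
  finally show ?thesis .
qed

lemma k_cliques_eq_0:
  "\<forall>S. is_clique W E S \<longrightarrow> card S \<le> r \<Longrightarrow> r < s \<Longrightarrow> k_cliques s W E = 0"
  unfolding k_cliques_def by (metis (mono_tags, lifting) Collect_empty_eq card.empty leD)

lemma cliques_through_le_k_cliques_nbhd:
  assumes "finite W" "v \<in> W" "1 \<le> s"
  shows "cliques_through s W E v \<le> k_cliques (s - 1) (nbhd W E v) E"
  unfolding cliques_through_def k_cliques_def
proof (rule card_inj_on_le[where f = "\<lambda>S. S - {v}"])
  show "inj_on (\<lambda>S. S - {v}) {S. is_clique W E S \<and> card S = s \<and> v \<in> S}"
    by (rule inj_onI) (metis CollectD insert_Diff)
  show "(\<lambda>S. S - {v}) ` {S. is_clique W E S \<and> card S = s \<and> v \<in> S}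
        \<subseteq> {S. is_clique (nbhd W E v) E S \<and> card S = s - 1}"
  proof (rule image_subsetI)
    fix S assume "S \<in> {S. is_clique W E S \<and> card S = s \<and> v \<in> S}"
    then have S: "is_clique W E S" "v \<in> S" "card S = s" by auto
    then have "finite S" using assms(1) by (auto simp: is_clique_def intro: finite_subset)
    then show "S - {v} \<in> {S. is_clique (nbhd W E v) E S \<and> card S = s - 1}"
      using S by (auto simp: is_clique_def nbhd_def)
  qed
  show "finite {S. is_clique (nbhd W E v) E S \<and> card S = s - 1}"
    using assms(1) nbhd_subset by (intro finite_cliques) (rule finite_subset)
qed

lemma clique_bound_nbhd:
  assumes "\<forall>S. is_clique W E S \<longrightarrow> card S \<le> Suc r" "finite W" "v \<in> W"
  shows "\<forall>T. is_clique (nbhd W E v) E T \<longrightarrow> card T \<le> r"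
proof (intro allI impI)
  fix T assume T: "is_clique (nbhd W E v) E T"
  then have "is_clique W E (insert v T)" using assms(3) by (auto simp: is_clique_def nbhd_def)
  then have "card (insert v T) \<le> Suc r" using assms(1) by blast
  moreover have "finite T" "v \<notin> T"
    using T assms(2) by (auto simp: is_clique_def nbhd_def intro: finite_subset)
  ultimately show "card T \<le> r" by simp
qed

lemma sum_cliques_through:
  assumes "finite V"
  shows "(\<Sum>v\<in>V. cliques_through s V E v) = s * k_cliques s V E"
proof -
  define C where "C = {S. is_clique V E S \<and> card S = s}"
  have C: "finite C" "\<forall>S\<in>C. S \<subseteq> V"
    unfolding C_def using assms by (auto simp: finite_cliques is_clique_def)
  have "cliques_through s V E v = (\<Sum>S\<in>C. if v \<in> S then 1 else 0)" for v
  proof -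
    have "{S. is_clique V E S \<and> card S = s \<and> v \<in> S} = C \<inter> {S. v \<in> S}"
      unfolding C_def by blast
    then show ?thesis unfolding cliques_through_def using C(1) by (simp add: sum.If_cases)
  qed
  then have "(\<Sum>v\<in>V. cliques_through s V E v) = (\<Sum>v\<in>V. \<Sum>S\<in>C. if v \<in> S then 1 else 0)"
    by simp
  also have "\<dots> = (\<Sum>S\<in>C. \<Sum>v\<in>V. if v \<in> S then 1 else 0)" by (rule sum.swap)
  also have "\<dots> = (\<Sum>S\<in>C. card S)"
    using assms C(2) by (intro sum.cong) (auto simp: sum.If_cases Int_absorb1)
  also have "\<dots> = s * card C" unfolding C_def by simp
  finally show ?thesis unfolding C_def k_cliques_def .
qed

lemma k_cliques_le_subset_plus_through:
  assumes "finite W" "N \<subseteq> W"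
  shows "k_cliques s W E \<le> k_cliques s N E + (\<Sum>u\<in>W - N. cliques_through s W E u)"
proof -
  let ?K = "\<lambda>W. {S. is_clique W E S \<and> card S = s}"
  let ?T = "\<lambda>u. {S. is_clique W E S \<and> card S = s \<and> u \<in> S}"
  have "?K W \<subseteq> ?K N \<union> (\<Union>u\<in>W - N. ?T u)"
    by (auto simp: is_clique_def)
  then have "k_cliques s W E \<le> card (?K N \<union> (\<Union>u\<in>W - N. ?T u))"
    unfolding k_cliques_def using assms finite_subset[OF assms(2,1)]
    by (intro card_mono) (auto intro: finite_cliques)
  also have "\<dots> \<le> k_cliques s N E + card (\<Union>u\<in>W - N. ?T u)"
    unfolding k_cliques_def by (rule card_Un_le)
  also have "card (\<Union>u\<in>W - N. ?T u) \<le> (\<Sum>u\<in>W - N. cliques_through s W E u)"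
    unfolding cliques_through_def using assms(1) by (intro card_UN_le) simp
  finally show ?thesis by simp
qed

lemma k_cliques_le_nbhd_of_max:
  assumes "finite W" "v \<in> W" "1 \<le> s"
    and max: "\<forall>u\<in>W. cliques_through s W E u \<le> cliques_through s W E v"
  defines "N \<equiv> nbhd W E v"
  shows "k_cliques s W E \<le> k_cliques s N E + card (W - N) * k_cliques (s - 1) N E"
proof -
  have "k_cliques s W E \<le> k_cliques s N E + (\<Sum>u\<in>W - N. cliques_through s W E u)"
    unfolding N_def using assms(1) nbhd_subset by (rule k_cliques_le_subset_plus_through)
  also have "(\<Sum>u\<in>W - N. cliques_through s W E u) \<le> card (W - N) * cliques_through s W E v"
    using sum_bounded_above[of "W - N" "cliques_through s W E"] max by auto
  also have "cliques_through s W E v \<le> k_cliques (s - 1) N E"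
    unfolding N_def using assms(1-3) by (rule cliques_through_le_k_cliques_nbhd)
  finally show ?thesis by (simp add: mult_left_mono)
qed

lemma obtain_max_on_finite:
  fixes f :: "'a \<Rightarrow> 'b::linorder"
  assumes "finite W" "W \<noteq> {}"
  obtains v where "v \<in> W" "\<forall>u\<in>W. f u \<le> f v"
proof -
  have "Max (f ` W) \<in> f ` W" using assms by simp
  then obtain v where "v \<in> W" "f v = Max (f ` W)" by (metis imageE)
  with assms(1) that show thesis by simp
qed

lemma k_cliques_le_binomial:
  assumes "1 \<le> r" "finite W" "\<forall>S. is_clique W E S \<longrightarrow> card S \<le> r"
  shows "real (k_cliques s W E) \<le> real (r choose s) * (real (card W) / real r) ^ s"
  using assms
proof (induction r arbitrary: W s rule: nat_induct_at_least)
  case base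
  consider "s = 0" | "s = 1" | "1 < s" by linarith
  then show ?case
    by cases (use base k_cliques_0 k_cliques_1_le[of W E] k_cliques_eq_0[of W E 1 s] in auto)
next
  case (Suc p)
  consider "s = 0" | "W = {}" "s \<noteq> 0" | "W \<noteq> {}" "s \<noteq> 0" by blast
  then show ?case
  proof cases
    case 1
    then show ?thesis using Suc.prems(1) k_cliques_0 by simp
  next
    case 2
    then have "k_cliques s W E = 0" by (intro k_cliques_eq_0[of _ _ 0]) (auto simp: is_clique_def)
    then show ?thesis by simp
  next
    case 3
    then obtain j where s: "s = Suc j" using not0_implies_Suc by blast
    obtain v where v: "v \<in> W" "\<forall>u\<in>W. cliques_through s W E u \<le> cliques_through s W E v"
      using obtain_max_on_finite[OF Suc.prems(1) 3(1)] by blast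
    define N where "N = nbhd W E v"
    define x where "x = real (card N) / real p"
    define y where "y = real (card (W - N))"
    have N: "finite N" "card N \<le> card W" "\<forall>T. is_clique N E T \<longrightarrow> card T \<le> p"
      unfolding N_def using Suc.prems(1) nbhd_subset[of W E v] clique_bound_nbhd[OF Suc.prems(2,1) v(1)]
      by (auto intro: finite_subset card_mono)
    have IH: "real (k_cliques i N E) \<le> real (p choose i) * x ^ i" for i
      unfolding x_def by (rule Suc.IH[OF N(1,3)])
    have "real (k_cliques s W E) \<le> real (k_cliques s N E) + y * real (k_cliques j N E)"
      using k_cliques_le_nbhd_of_max[OF Suc.prems(1) v(1) _ v(2)] s
      unfolding N_def y_def by (simp flip: of_nat_mult of_nat_add)
    also have "\<dots> \<le> real (p choose Suc j) * x ^ Suc j + y * (real (p choose j) * x ^ j)"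
      using IH[of "Suc j"] IH[of j] s unfolding y_def by (intro add_mono mult_left_mono) auto
    also have "\<dots> \<le> real (Suc p choose Suc j) * ((p * x + y) / (real p + 1)) ^ Suc j"
      using Suc.hyps unfolding x_def y_def by (intro binomial_power_mix_le) auto
    also have "p * x + y = real (card W)"
      using Suc.hyps N(2) Suc.prems(1) nbhd_subset[of W E v]
      unfolding x_def y_def N_def by (simp add: card_Diff_subset finite_subset)
    finally show ?thesis using s by (simp add: add.commute)
  qed
qed

lemma cliques_through_le_nbhd_bound:
  assumes "in_class \<Delta> \<omega> V E" "2 \<le> \<omega>" "1 \<le> t" "v \<in> V"
  shows "real (cliques_through t V E v)
           \<le> real ((\<omega> - 1) choose (t - 1)) * (real \<Delta> / real (\<omega> - 1)) ^ (t - 1)"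
proof -
  have V: "finite V" "\<forall>S. is_clique V E S \<longrightarrow> card S \<le> Suc (\<omega> - 1)" "degree V E v \<le> \<Delta>"
    using assms by (auto simp: in_class_def simple_graph_def)
  define N where "N = nbhd V E v"
  have N: "finite N" "\<forall>T. is_clique N E T \<longrightarrow> card T \<le> \<omega> - 1"
    unfolding N_def using V(1) nbhd_subset[of V E v] clique_bound_nbhd[OF V(2,1) assms(4)]
    by (auto intro: finite_subset)
  have "card N \<le> card {u \<in> V. E v u}" unfolding N_def nbhd_def using V(1) by (intro card_mono) auto
  then have deg: "card N \<le> \<Delta>" using V(3) by (simp add: degree_def)
  have "cliques_through t V E v \<le> k_cliques (t - 1) N E"
    unfolding N_def using V(1) assms(4,3) by (rule cliques_through_le_k_cliques_nbhd)
  then have "real (cliques_through t V E v) \<le> real (k_cliques (t - 1) N E)" by simp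
  also have "\<dots> \<le> real ((\<omega> - 1) choose (t - 1)) * (real (card N) / real (\<omega> - 1)) ^ (t - 1)"
    using assms(2) N by (intro k_cliques_le_binomial) auto
  also have "\<dots> \<le> real ((\<omega> - 1) choose (t - 1)) * (real \<Delta> / real (\<omega> - 1)) ^ (t - 1)"
    using deg by (intro mult_left_mono power_mono divide_right_mono) auto
  finally show ?thesis .
qed

lemma rho_le_bound:
  assumes "in_class \<Delta> \<omega> V E" "V \<noteq> {}" "2 \<le> \<omega>" "1 \<le> t"
  shows "rho t V E \<le> 1 / real t * real ((\<omega> - 1) choose (t - 1)) * (real \<Delta> / real (\<omega> - 1)) ^ (t - 1)"
proof -
  define M where "M = real ((\<omega> - 1) choose (t - 1)) * (real \<Delta> / real (\<omega> - 1)) ^ (t - 1)"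
  have V: "finite V" using assms(1) by (simp add: in_class_def simple_graph_def)
  have "real t * real (k_cliques t V E) = (\<Sum>v\<in>V. real (cliques_through t V E v))"
    using sum_cliques_through[OF V, of t E] by (metis of_nat_mult of_nat_sum)
  also have "\<dots> \<le> (\<Sum>v\<in>V. M)"
    unfolding M_def using assms cliques_through_le_nbhd_bound by (intro sum_mono) blast
  also have "\<dots> = real (card V) * M" by simp
  finally have "real t * real (k_cliques t V E) \<le> real (card V) * M" .
  moreover have "card V > 0" "t > 0" using V assms(2,4) by (auto simp: card_gt_0_iff)
  ultimately have "rho t V E \<le> M / real t" unfolding rho_def by (simp add: field_simps)
  then show ?thesis unfolding M_def by simp
qed

lemma is_clique_turan_iff:
  "is_clique {0..<n} (turan_E n w) S \<longleftrightarrow> S \<subseteq> {0..<n} \<and> inj_on (\<lambda>i. i mod w) S"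
  by (auto simp: is_clique_def turan_E_def inj_on_def)

lemma in_class_turan:
  assumes "0 < w"
  shows "in_class ((w - 1) * a) w {0..<w * a} (turan_E (w * a) w)"
proof -
  have deg: "degree {0..<w * a} (turan_E (w * a) w) v \<le> (w - 1) * a" for v
  proof -
    define P where "P = (\<lambda>q. v mod w + w * q) ` {0..<a}"
    have "inj_on (\<lambda>q. v mod w + w * q) {0..<a}" using assms by (auto simp: inj_on_def)
    then have "card P = a" unfolding P_def by (simp add: card_image)
    moreover have "P \<subseteq> {0..<w * a}"
    proof
      fix i assume "i \<in> P"
      then obtain q where "q < a" "i = v mod w + w * q" unfolding P_def by auto
      moreover have "w * (q + 1) \<le> w * a" using \<open>q < a\<close> by (intro mult_le_mono2) simp
      moreover have "v mod w < w" using assms by simp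
      ultimately show "i \<in> {0..<w * a}" by simp
    qed
    moreover have "{u \<in> {0..<w * a}. turan_E (w * a) w v u} \<subseteq> {0..<w * a} - P"
      unfolding P_def turan_E_def by auto
    ultimately have "degree {0..<w * a} (turan_E (w * a) w) v \<le> card ({0..<w * a} - P)"
      unfolding degree_def by (intro card_mono) auto
    also have "\<dots> = w * a - a" using \<open>card P = a\<close> \<open>P \<subseteq> {0..<w * a}\<close>
      by (simp add: card_Diff_subset finite_subset)
    finally have "degree {0..<w * a} (turan_E (w * a) w) v \<le> w * a - a" .
    then show ?thesis by (simp add: diff_mult_distrib)
  qed
  have "card S \<le> w" if "is_clique {0..<w * a} (turan_E (w * a) w) S" for S
  proof -
    have "inj_on (\<lambda>i. i mod w) S" "(\<lambda>i. i mod w) ` S \<subseteq> {0..<w}"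
      using that assms by (auto simp: is_clique_turan_iff)
    then show ?thesis using card_inj_on_le[of "\<lambda>i. i mod w" S "{0..<w}"] by simp
  qed
  with deg show ?thesis
    unfolding in_class_def simple_graph_def turan_E_def by auto
qed

text \<open>Vertex i of the Turan graph lies in part i mod w at height i div w; a clique picks
a set J of parts and a height f j in each of them.\<close>

definition turan_enc :: "nat \<Rightarrow> nat set \<Rightarrow> (nat \<Rightarrow> nat) \<Rightarrow> nat set" where
  "turan_enc w J f = (\<lambda>j. j + w * f j) ` J"

lemma mod_image_turan_enc: "J \<subseteq> {0..<w} \<Longrightarrow> (\<lambda>i. i mod w) ` turan_enc w J f = J"
  unfolding turan_enc_def by (force simp: image_image)

lemma inj_on_turan_enc:
  assumes "0 < w"
  shows "inj_on (\<lambda>(J, f). turan_enc w J f) (SIGMA J:{J. J \<subseteq> {0..<w}}. J \<rightarrow>\<^sub>E {0..<a})"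
proof (rule inj_onI, clarify)
  fix J f J' f' assume J: "J \<subseteq> {0..<w}" "f \<in> J \<rightarrow>\<^sub>E {0..<a}" "J' \<subseteq> {0..<w}" "f' \<in> J' \<rightarrow>\<^sub>E {0..<a}"
    and eq: "turan_enc w J f = turan_enc w J' f'"
  have "J = J'" using mod_image_turan_enc[OF J(1), of f] mod_image_turan_enc[OF J(3), of f'] eq
    by simp
  moreover have "f j = f' j" if "j \<in> J" for j
  proof -
    have "j + w * f j \<in> turan_enc w J' f'" using eq that by (auto simp: turan_enc_def)
    then obtain j' where "j' \<in> J'" and enc: "j + w * f j = j' + w * f' j'"
      by (auto simp: turan_enc_def)
    then have "j < w" "j' < w" using J(1,3) that by auto
    then have "j = j'" using arg_cong[OF enc, of "\<lambda>i. i mod w"] by simp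
    with \<open>j < w\<close> show ?thesis using arg_cong[OF enc, of "\<lambda>i. i div w"] by simp
  qed
  ultimately show "J = J' \<and> f = f'" using J(2,4) by (auto intro: PiE_ext)
qed

lemma turan_enc_subset_inj_card:
  assumes "J \<subseteq> {0..<w}" "f \<in> J \<rightarrow>\<^sub>E {0..<a}"
  shows "turan_enc w J f \<subseteq> {0..<w * a} \<and> inj_on (\<lambda>i. i mod w) (turan_enc w J f)
           \<and> card (turan_enc w J f) = card J"
proof -
  have "j + w * f j < w * a" if "j \<in> J" for j
  proof -
    have "f j < a" using PiE_mem[OF assms(2) that] by simp
    then have "w * (f j + 1) \<le> w * a" by (intro mult_le_mono2) simp
    then show ?thesis using assms(1) that by auto
  qed
  moreover have "inj_on (\<lambda>i. i mod w) (turan_enc w J f)"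
    using assms(1) by (auto simp: inj_on_def subset_iff turan_enc_def)
  moreover have "inj_on (\<lambda>j. j + w * f j) J"
    using assms(1) by (auto simp: inj_on_def subset_iff dest: arg_cong[of _ _ "\<lambda>i. i mod w"])
  ultimately show ?thesis by (auto simp: turan_enc_def card_image)
qed

lemma turan_enc_surj:
  assumes "0 < w" "S \<subseteq> {0..<w * a}" "inj_on (\<lambda>i. i mod w) S"
  obtains f where "f \<in> (\<lambda>i. i mod w) ` S \<rightarrow>\<^sub>E {0..<a}" "turan_enc w ((\<lambda>i. i mod w) ` S) f = S"
proof
  have inv: "inv_into S (\<lambda>i. i mod w) (i mod w) = i" if "i \<in> S" for i
    using inv_into_f_f[OF assms(3) that] by simp
  define f where "f = restrict (\<lambda>j. inv_into S (\<lambda>i. i mod w) j div w) ((\<lambda>i. i mod w) ` S)"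
  show "f \<in> (\<lambda>i. i mod w) ` S \<rightarrow>\<^sub>E {0..<a}"
    unfolding f_def using assms(2) by (auto simp: inv less_mult_imp_div_less mult.commute)
  have "turan_enc w ((\<lambda>i. i mod w) ` S) f = (\<lambda>i. i mod w + w * f (i mod w)) ` S"
    unfolding turan_enc_def by (simp add: image_image)
  also have "\<dots> = (\<lambda>i. i mod w + w * (i div w)) ` S"
    by (intro image_cong) (auto simp: f_def inv)
  finally show "turan_enc w ((\<lambda>i. i mod w) ` S) f = S" by simp
qed

lemma bij_betw_turan_cliques:
  assumes "0 < w"
  shows "bij_betw (\<lambda>(J, f). turan_enc w J f)
           (SIGMA J:{J. J \<subseteq> {0..<w} \<and> card J = t}. J \<rightarrow>\<^sub>E {0..<a})
           {S. S \<subseteq> {0..<w * a} \<and> inj_on (\<lambda>i. i mod w) S \<and> card S = t}"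
  unfolding bij_betw_def
proof (intro conjI)
  show "inj_on (\<lambda>(J, f). turan_enc w J f) (SIGMA J:{J. J \<subseteq> {0..<w} \<and> card J = t}. J \<rightarrow>\<^sub>E {0..<a})"
    using inj_on_turan_enc[OF assms] by (rule inj_on_subset) auto
  show "(\<lambda>(J, f). turan_enc w J f) ` (SIGMA J:{J. J \<subseteq> {0..<w} \<and> card J = t}. J \<rightarrow>\<^sub>E {0..<a})
        = {S. S \<subseteq> {0..<w * a} \<and> inj_on (\<lambda>i. i mod w) S \<and> card S = t}"
  proof (intro equalityI subsetI)
    fix S assume "S \<in> (\<lambda>(J, f). turan_enc w J f) ` (SIGMA J:{J. J \<subseteq> {0..<w} \<and> card J = t}. J \<rightarrow>\<^sub>E {0..<a})"
    then obtain J f where "S = turan_enc w J f" "J \<subseteq> {0..<w}" "card J = t" "f \<in> J \<rightarrow>\<^sub>E {0..<a}"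
      by auto
    then show "S \<in> {S. S \<subseteq> {0..<w * a} \<and> inj_on (\<lambda>i. i mod w) S \<and> card S = t}"
      using turan_enc_subset_inj_card[of J w f a] by simp
  next
    fix S assume "S \<in> {S. S \<subseteq> {0..<w * a} \<and> inj_on (\<lambda>i. i mod w) S \<and> card S = t}"
    then have S: "S \<subseteq> {0..<w * a}" "inj_on (\<lambda>i. i mod w) S" "card S = t" by auto
    obtain f where "f \<in> (\<lambda>i. i mod w) ` S \<rightarrow>\<^sub>E {0..<a}" "turan_enc w ((\<lambda>i. i mod w) ` S) f = S"
      using turan_enc_surj[OF assms S(1,2)] by blast
    moreover have "(\<lambda>i. i mod w) ` S \<subseteq> {0..<w}" "card ((\<lambda>i. i mod w) ` S) = t"
      using assms S by (auto simp: card_image)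
    ultimately show "S \<in> (\<lambda>(J, f). turan_enc w J f) ` (SIGMA J:{J. J \<subseteq> {0..<w} \<and> card J = t}. J \<rightarrow>\<^sub>E {0..<a})"
      by (intro image_eqI[where x = "((\<lambda>i. i mod w) ` S, f)"]) auto
  qed
qed

lemma k_cliques_turan:
  assumes "0 < w"
  shows "k_cliques t {0..<w * a} (turan_E (w * a) w) = (w choose t) * a ^ t"
proof -
  have "k_cliques t {0..<w * a} (turan_E (w * a) w)
        = card {S. S \<subseteq> {0..<w * a} \<and> inj_on (\<lambda>i. i mod w) S \<and> card S = t}"
    unfolding k_cliques_def is_clique_turan_iff by simp
  also have "\<dots> = card (SIGMA J:{J. J \<subseteq> {0..<w} \<and> card J = t}. J \<rightarrow>\<^sub>E {0..<a})"
    using bij_betw_same_card[OF bij_betw_turan_cliques[OF assms]] by simp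
  also have "\<dots> = (\<Sum>J\<in>{J. J \<subseteq> {0..<w} \<and> card J = t}. card (J \<rightarrow>\<^sub>E {0..<a}))"
    by (rule card_SigmaI) (auto intro: finite_subset finite_PiE)
  also have "\<dots> = (\<Sum>J\<in>{J. J \<subseteq> {0..<w} \<and> card J = t}. a ^ t)"
    by (intro sum.cong) (auto simp: card_PiE finite_subset)
  also have "\<dots> = (w choose t) * a ^ t" using n_subsets[of "{0..<w}" t] by simp
  finally show ?thesis .
qed

lemma rho_turan:
  assumes "0 < w" "2 \<le> t"
  shows "rho t {0..<w * a} (turan_E (w * a) w)
           = 1 / real t * real ((w - 1) choose (t - 1)) * real a ^ (t - 1)"
proof (cases "a = 0")
  case True
  then show ?thesis using assms(2) by (simp add: rho_def)
next
  case False
  have "real t * real (w choose t) = real w * real ((w - 1) choose (t - 1))"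
    using times_binomial_minus1_eq[of t w] assms by (simp flip: of_nat_mult)
  moreover have "real a ^ t = real a * real a ^ (t - 1)"
    using assms(2) by (simp flip: power_Suc)
  ultimately show ?thesis
    using False assms k_cliques_turan[OF assms(1), of t a] by (simp add: rho_def field_simps)
qed

lemma in_class_mono:
  "in_class \<Delta> \<omega> V E \<Longrightarrow> \<Delta> \<le> \<Delta>' \<Longrightarrow> \<omega> \<le> \<omega>' \<Longrightarrow> in_class \<Delta>' \<omega>' V E"
  unfolding in_class_def by force

lemma rho_le_f_sup: "in_class \<Delta> \<omega> V E \<Longrightarrow> V \<noteq> {} \<Longrightarrow> ereal (rho t V E) \<le> f_sup t \<Delta> \<omega>"
  unfolding f_sup_def by (rule SUP_upper2[of "(V, E)"]) auto

lemma f_sup_nonneg: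
  assumes "1 \<le> \<omega>"
  shows "0 \<le> f_sup t \<Delta> \<omega>"
proof -
  have "in_class \<Delta> \<omega> {0..<1} (turan_E 1 1)"
    using in_class_turan[of 1 1] assms by (auto elim: in_class_mono)
  then have "ereal (rho t {0..<1} (turan_E 1 1)) \<le> f_sup t \<Delta> \<omega>" by (rule rho_le_f_sup) simp
  moreover have "0 \<le> ereal (rho t {0..<1} (turan_E 1 1))" by (simp add: rho_def)
  ultimately show ?thesis by (rule order_trans[rotated])
qed

lemma f_sup_le:
  assumes "2 \<le> \<omega>" "1 \<le> t"
  shows "f_sup t \<Delta> \<omega>
           \<le> ereal (1 / real t * real ((\<omega> - 1) choose (t - 1)) * (real \<Delta> / real (\<omega> - 1)) ^ (t - 1))"
    (is "_ \<le> ereal ?B")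
  unfolding f_sup_def
proof (rule SUP_least)
  fix G assume "G \<in> {(V, E). in_class \<Delta> \<omega> V E \<and> V \<noteq> {}}"
  then obtain V E where "G = (V, E)" "in_class \<Delta> \<omega> V E" "V \<noteq> {}" by auto
  moreover from this(2,3) have "rho t V E \<le> ?B" using assms by (rule rho_le_bound)
  ultimately show "ereal (rho t (fst G) (snd G)) \<le> ereal ?B" by simp
qed

theorem mainTheorem5:
  fixes \<Delta> \<omega> t :: nat
  assumes "\<omega> \<ge> 2" and "2 \<le> t" and "t \<le> \<omega>" and "(\<omega> - 1) dvd \<Delta>"
  shows "f_sup t \<Delta> \<omega> = ereal (rho t (turan_V (\<Delta> + \<Delta> div (\<omega> - 1)))
                                      (turan_E (\<Delta> + \<Delta> div (\<omega> - 1)) \<omega>))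
       \<and> rho t (turan_V (\<Delta> + \<Delta> div (\<omega> - 1))) (turan_E (\<Delta> + \<Delta> div (\<omega> - 1)) \<omega>)
           = (1 / real t) * real ((\<omega> - 1) choose (t - 1))
               * (real \<Delta> / real (\<omega> - 1)) ^ (t - 1)"
proof -
  obtain a where a: "\<Delta> = (\<omega> - 1) * a" using assms(4) by blast
  with assms(1) have n: "\<Delta> + \<Delta> div (\<omega> - 1) = \<omega> * a" and ratio: "real \<Delta> / real (\<omega> - 1) = a"
    by (cases \<omega>; simp)+
  define R where "R = 1 / real t * real ((\<omega> - 1) choose (t - 1)) * (real \<Delta> / real (\<omega> - 1)) ^ (t - 1)"
  have rho_T: "rho t {0..<\<omega> * a} (turan_E (\<omega> * a) \<omega>) = R"
    unfolding R_def ratio using assms(1,2) by (intro rho_turan) auto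
  have "ereal R \<le> f_sup t \<Delta> \<omega>"
  proof (cases "a = 0")
    case True
    then have "R = 0" unfolding R_def ratio using assms(2) by simp
    then show ?thesis using f_sup_nonneg[of \<omega> t \<Delta>] assms(1) by (simp flip: zero_ereal_def)
  next
    case False
    have "in_class \<Delta> \<omega> {0..<\<omega> * a} (turan_E (\<omega> * a) \<omega>)"
      using in_class_turan[of \<omega> a] a assms(1) by simp
    moreover have "{0..<\<omega> * a} \<noteq> {}" using False assms(1) by simp
    ultimately show ?thesis unfolding rho_T[symmetric] by (rule rho_le_f_sup)
  qed
  moreover have "f_sup t \<Delta> \<omega> \<le> ereal R" unfolding R_def using assms(1,2) by (intro f_sup_le) auto
  ultimately show ?thesis using rho_T unfolding n turan_V_def R_def by simp
qed

end
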